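(* Let $p\le q$, let $\mathcal{E}(d)$ denote the Euclidean group (rigid motions) of $\mathbb{R}^d$, and let $X\subset\mathbb{R}^p$, $Y\subset\mathbb{R}^q$. Let $\mu=\sum_{i=1}^n a_i\delta_{x_i}$ be a discrete measure on $X$ and $\nu=\sum_{j=1}^m b_j\delta_{y_j}$ a discrete measure on $Y$, with $a\in\Delta_n$, $b\in\Delta_m$. Let $\mathcal{F}$ be a class of slicers $f:\mathbb{R}^q\to\mathbb{R}$ and $\mathcal{H}$ a class of measurable liftings $h:\mathbb{R}^p\to\mathbb{R}^q$, and assume they are stable under rigid motions: for all $(f,h)\in\mathcal{F}\times\mathcal{H}$, $g_X\in\mathcal{E}(p)$ and $g_Y\in\mathcal{E}(q)$, \[ f\circ g_Y^{-1}\in\mathcal{F},\qquad g_Y\circ h\circ g_X^{-1}\in\mathcal{H}. \] Then for all $g_X\in\mathcal{E}(p)$ and $g_Y\in\mathcal{E}(q)$, \[ \mathrm{min\text{-}GSGW}(g_{X\#}\mu,g_{Y\#}\nu)=\mathrm{min\text{-}GSGW}(\mu,\nu). \]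
   Context: $\Delta_n$ is the probability simplex in $\mathbb{R}^n$. For discrete measures $\mu=\sum_i a_i\delta_{x_i}$, $\nu=\sum_j b_j\delta_{y_j}$ in Euclidean spaces, let $C^X_{ii'}=\|x_i-x_{i'}\|$ and $C^Y_{jj'}=\|y_j-y_{j'}\|$ be the intra-space Euclidean distance matrices, let $\Pi(a,b)$ be the set of nonnegative $n\times m$ matrices with row sums $a$ and column sums $b$, and define the Gromov--Wasserstein loss \[ \mathcal{L}_{\mathrm{GW}}(\mu,\nu;\pi)=\sum_{i,i',j,j'}\bigl(C^X_{ii'}-C^Y_{jj'}\bigr)^2\pi_{ij}\pi_{i'j'}. \] For $(f,h)\in\mathcal{F}\times\mathcal{H}$, set the one-dimensional values $s_i=f(h(x_i))$ and $t_j=f(y_j)$. The lifted monotone plan $\pi^{\mathrm{mon}}_{f,h}\in\Pi(a,b)$ is obtained by computing the one-dimensional monotone (sorting-based, quantile) coupling between $\sum_i a_i\delta_{s_i}$ and $\sum_j b_j\delta_{t_j}$, where the atoms are indexed by $i$ and $j$ and sorted in nondecreasing order of their values (ties broken by a fixed deterministic rule depending only on the values and indices), and letting $(\pi^{\mathrm{mon}}_{f,h})_{ij}$ be the mass this coupling assigns to the pair of atoms $(s_i,t_j)$. The min Generalized Sliced Gromov--Wasserstein discrepancy is \[ \mathrm{min\text{-}GSGW}(\mu,\nu)=\inf_{f\in\mathcal{F},\,h\in\mathcal{H}}\mathcal{L}_{\mathrm{GW}}\bigl(\mu,\nu;\pi^{\mathrm{mon}}_{f,h}\bigr). \] $g_{\#}$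 denotes push-forward by $g$. *)

theory Defs
  imports "HOL-Analysis.Analysis"
begin

definition rigid_motion :: "('a::real_inner \<Rightarrow> 'a) \<Rightarrow> bool" where
  "rigid_motion g \<longleftrightarrow> (\<exists>A b. orthogonal_transformation A \<and> g = (\<lambda>x. A x + b))"

definition prob_simplex :: "nat \<Rightarrow> (nat \<Rightarrow> real) \<Rightarrow> bool" where
  "prob_simplex n a \<longleftrightarrow> (\<forall>i<n. 0 \<le> a i) \<and> (\<Sum>i<n. a i) = 1"

text \<open>Deterministic tie-breaking order: atom k precedes atom i iff (s k, k) < (s i, i)
  lexicographically. Lower cumulative mass of atom i in the sorted order.\<close>
definition cum_lower :: "nat \<Rightarrow> (nat \<Rightarrow> real) \<Rightarrow> (nat \<Rightarrow> real) \<Rightarrow> nat \<Rightarrow> real" where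
  "cum_lower n a s i = (\<Sum>k\<in>{k. k < n \<and> (s k < s i \<or> (s k = s i \<and> k < i))}. a k)"

text \<open>One-dimensional monotone (quantile / north-west corner) coupling between
  \<Sum>_i a_i \<delta>_{s_i} and \<Sum>_j b_j \<delta>_{t_j}: entry (i,j) is the length of the overlap of
  the quantile intervals [A_i^-, A_i^- + a_i) and [B_j^-, B_j^- + b_j).\<close>
definition mono_plan ::
  "nat \<Rightarrow> (nat \<Rightarrow> real) \<Rightarrow> (nat \<Rightarrow> real) \<Rightarrow> nat \<Rightarrow> (nat \<Rightarrow> real) \<Rightarrow> (nat \<Rightarrow> real)
     \<Rightarrow> nat \<Rightarrow> nat \<Rightarrow> real" where
  "mono_plan n a s m b t i j =
     max 0 (min (cum_lower n a s i + a i) (cum_lower m b t j + b j)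
            - max (cum_lower n a s i) (cum_lower m b t j))"

definition GW_loss ::
  "nat \<Rightarrow> (nat \<Rightarrow> 'a::metric_space) \<Rightarrow> nat \<Rightarrow> (nat \<Rightarrow> 'b::metric_space)
     \<Rightarrow> (nat \<Rightarrow> nat \<Rightarrow> real) \<Rightarrow> real" where
  "GW_loss n x m y \<pi> =
     (\<Sum>i<n. \<Sum>i'<n. \<Sum>j<m. \<Sum>j'<m.
        (dist (x i) (x i') - dist (y j) (y j'))\<^sup>2 * \<pi> i j * \<pi> i' j')"

definition lifted_mono_plan ::
  "('b \<Rightarrow> real) \<Rightarrow> ('a \<Rightarrow> 'b) \<Rightarrow> nat \<Rightarrow> (nat \<Rightarrow> real) \<Rightarrow> (nat \<Rightarrow> 'a)
     \<Rightarrow> nat \<Rightarrow> (nat \<Rightarrow> real) \<Rightarrow> (nat \<Rightarrow> 'b) \<Rightarrow> nat \<Rightarrow> nat \<Rightarrow> real" where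
  "lifted_mono_plan f h n a x m b y =
     mono_plan n a (\<lambda>i. f (h (x i))) m b (\<lambda>j. f (y j))"

definition min_GSGW ::
  "('b::metric_space \<Rightarrow> real) set \<Rightarrow> ('a::metric_space \<Rightarrow> 'b) set
     \<Rightarrow> nat \<Rightarrow> (nat \<Rightarrow> real) \<Rightarrow> (nat \<Rightarrow> 'a) \<Rightarrow> nat \<Rightarrow> (nat \<Rightarrow> real) \<Rightarrow> (nat \<Rightarrow> 'b) \<Rightarrow> real" where
  "min_GSGW F H n a x m b y =
     (INF fh\<in>F \<times> H. GW_loss n x m y (lifted_mono_plan (fst fh) (snd fh) n a x m b y))"

end

theory Submission
  imports Defs
begin

(* Moving the atoms by rigid motions g_X, g_Y and replacing a slicer/lifting pair (f, h)
   by its conjugate (f o g_Y^-1, g_Y o h o g_X^-1) leaves the one-dimensional values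
   f (h (x i)) and f (y j) unchanged, hence also the monotone plan; and the GW loss only
   sees intra-space distances, which rigid motions preserve. Since F and H are stable,
   conjugation is a bijection of F x H, so both infima range over the same values. *)

lemma rigid_motion_dist:
  fixes g :: "'a::real_inner \<Rightarrow> 'a"
  assumes "rigid_motion g"
  shows "dist (g u) (g v) = dist u v"
proof -
  obtain A b where A: "orthogonal_transformation A" and g: "g = (\<lambda>x. A x + b)"
    using assms unfolding rigid_motion_def by blast
  have "g u - g v = A (u - v)"
    using orthogonal_transformation_linear[OF A] by (simp add: g linear_diff)
  then show ?thesis
    by (simp add: dist_norm orthogonal_transformation_norm[OF A])
qed

lemma rigid_motion_inv:
  fixes g :: "'a::euclidean_space \<Rightarrow> 'a"
  assumes "rigid_motion g"
  shows "bij g" and "rigid_motion (inv g)"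
proof -
  obtain A b where A: "orthogonal_transformation A" and g: "g = (\<lambda>x. A x + b)"
    using assms unfolding rigid_motion_def by blast
  define k where "k = (\<lambda>y. inv A y + - inv A b)"
  have A_inv: "orthogonal_transformation (inv A)"
    using orthogonal_transformation_inv[OF A] .
  have bij_A: "bij A"
    using orthogonal_transformation_bij[OF A] .
  have g_k: "g (k y) = y" for y
    using orthogonal_transformation_linear[OF A] bij_A
    by (simp add: g k_def linear_diff bij_is_surj surj_f_inv_f)
  have k_g: "k (g x) = x" for x
    using orthogonal_transformation_linear[OF A_inv] bij_A
    by (simp add: g k_def linear_add bij_is_inj inv_f_f)
  show "bij g"
    using g_k k_g by (intro o_bij[of k]) (auto simp: fun_eq_iff)
  have "inv g = k"
    using g_k k_g by (intro inv_equality) auto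
  then show "rigid_motion (inv g)"
    unfolding rigid_motion_def k_def using A_inv by blast
qed

lemma GW_loss_isometric_images:
  assumes "\<And>u v. dist (gX u) (gX v) = dist u v" and "\<And>u v. dist (gY u) (gY v) = dist u v"
  shows "GW_loss n (gX \<circ> x) m (gY \<circ> y) \<pi> = GW_loss n x m y \<pi>"
  unfolding GW_loss_def by (simp add: assms)

lemma lifted_mono_plan_conjugate:
  assumes "inj gX" and "inj gY"
  shows "lifted_mono_plan (f \<circ> inv gY) (gY \<circ> h \<circ> inv gX) n a (gX \<circ> x) m b (gY \<circ> y)
       = lifted_mono_plan f h n a x m b y"
  unfolding lifted_mono_plan_def by (simp add: assms inv_f_f)

lemma min_GSGW_rigid_invariant:
  fixes F :: "('b::euclidean_space \<Rightarrow> real) set" and H :: "('a::euclidean_space \<Rightarrow> 'b) set"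
  assumes F_stable: "\<forall>f\<in>F. \<forall>g. rigid_motion g \<longrightarrow> f \<circ> inv g \<in> F"
    and H_stable: "\<forall>h\<in>H. \<forall>g1 g2. rigid_motion g1 \<longrightarrow> rigid_motion g2 \<longrightarrow> g2 \<circ> h \<circ> inv g1 \<in> H"
    and gX: "rigid_motion gX" and gY: "rigid_motion gY"
  shows "min_GSGW F H n a (gX \<circ> x) m b (gY \<circ> y) = min_GSGW F H n a x m b y"
proof -
  have bij_gX: "bij gX" and bij_gY: "bij gY"
    using rigid_motion_inv gX gY by blast+
  define T where "T = (\<lambda>(f :: 'b \<Rightarrow> real, h). (f \<circ> inv gY, gY \<circ> h \<circ> inv gX))"
  have T_onto: "T ` (F \<times> H) = F \<times> H"
  proof
    show "T ` (F \<times> H) \<subseteq> F \<times> H"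
      using F_stable H_stable gX gY by (auto simp: T_def)
    show "F \<times> H \<subseteq> T ` (F \<times> H)"
    proof clarify
      fix f h assume "f \<in> F" "h \<in> H"
      moreover have "rigid_motion (inv gX)" "rigid_motion (inv gY)"
        using rigid_motion_inv(2) gX gY by blast+
      ultimately have "(f \<circ> inv (inv gY), inv gY \<circ> h \<circ> inv (inv gX)) \<in> F \<times> H"
        using F_stable H_stable by simp
      moreover have "T (f \<circ> inv (inv gY), inv gY \<circ> h \<circ> inv (inv gX)) = (f, h)"
        using bij_gX bij_gY
        by (simp add: T_def inv_inv_eq fun_eq_iff bij_is_surj surj_f_inv_f)
      ultimately show "(f, h) \<in> T ` (F \<times> H)"
        by (metis image_eqI)
    qed
  qed
  have L_eq: "GW_loss n (gX \<circ> x) m (gY \<circ> y)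
      (lifted_mono_plan (fst (T fh)) (snd (T fh)) n a (gX \<circ> x) m b (gY \<circ> y))
    = GW_loss n x m y (lifted_mono_plan (fst fh) (snd fh) n a x m b y)" for fh
    using bij_gX bij_gY
    by (simp add: T_def case_prod_beta GW_loss_isometric_images rigid_motion_dist gX gY
        lifted_mono_plan_conjugate bij_is_inj)
  have "min_GSGW F H n a (gX \<circ> x) m b (gY \<circ> y)
    = (INF fh\<in>T ` (F \<times> H). GW_loss n (gX \<circ> x) m (gY \<circ> y)
         (lifted_mono_plan (fst fh) (snd fh) n a (gX \<circ> x) m b (gY \<circ> y)))"
    by (simp only: min_GSGW_def T_onto)
  also have "\<dots> = min_GSGW F H n a x m b y"
    unfolding min_GSGW_def image_comp by (simp add: L_eq)
  finally show ?thesis .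
qed

theorem proposition2:
  fixes F :: "(real ^ 'q \<Rightarrow> real) set"
    and H :: "(real ^ 'p \<Rightarrow> real ^ 'q) set"
    and X :: "(real ^ 'p) set" and Y :: "(real ^ 'q) set"
    and n m :: nat
    and a b :: "nat \<Rightarrow> real"
    and x :: "nat \<Rightarrow> real ^ 'p" and y :: "nat \<Rightarrow> real ^ 'q"
    and gX :: "real ^ 'p \<Rightarrow> real ^ 'p" and gY :: "real ^ 'q \<Rightarrow> real ^ 'q"
  assumes pq: "CARD('p) \<le> CARD('q)"
    and xX: "\<forall>i<n. x i \<in> X" and yY: "\<forall>j<m. y j \<in> Y"
    and a_simplex: "prob_simplex n a" and b_simplex: "prob_simplex m b"
    and H_meas: "\<forall>h\<in>H. h \<in> borel_measurable borel"
    and F_stable: "\<forall>f\<in>F. \<forall>g. rigid_motion g \<longrightarrow> f \<circ> inv g \<in> F"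
    and H_stable: "\<forall>h\<in>H. \<forall>g1 g2. rigid_motion g1 \<longrightarrow> rigid_motion g2 \<longrightarrow>
                      g2 \<circ> h \<circ> inv g1 \<in> H"
    and gX_rigid: "rigid_motion gX" and gY_rigid: "rigid_motion gY"
  shows "min_GSGW F H n a (gX \<circ> x) m b (gY \<circ> y) = min_GSGW F H n a x m b y"
proof -
  show ?thesis
    using min_GSGW_rigid_invariant[OF F_stable H_stable gX_rigid gY_rigid] .
qed

end
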